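(* Let $f\in\mathcal C$ be real-valued and define $\mathcal L_{f,t}(\Phi)=\mathcal L(e^{itf}\Phi)$ for $t\in\mathbb R$. There exists a constant $C_9>0$ such that $\|\mathcal L_{f,t}^n\|_{\mathcal C\to\mathcal C}\le C_9$ for all $n\in\mathbb N$ and all $t$ sufficiently close to $0$.
   Context: Let $I=[0,1)$ carry a metric $d_I$, fix $\theta\in(0,1)$, and let $\Omega=I^{\mathbb Z}$ with metric $d(x,y)=\sup_{k\in\mathbb Z}\theta^{|k|}d_I(x_k,y_k)$. Let $\tau:I\to I$ have full branches, so that $b=\#\tau^{-1}(t)$ is constant; let $p_\tau$ be a fixed point of $\tau$. Assume there is $\eta\in(0,1)$ such that every inverse branch $\zeta$ of $\tau$ satisfies $d_I(\zeta(s),\zeta(t))\le\eta\,d_I(s,t)$. Let $(\bar\tau x)_i=\tau(x_i)$. Let $\pi_k:\Omega\to\Omega$ keep the coordinates $|i|\le k$ and set the others to $p_\tau$; $\Phi_k=\Phi\circ\pi_k$. Fix $\beta\in(0,1]$; $|\Phi|_\infty=\sup|\Phi|$, $|\Phi|_\beta=\sup_{k\in\mathbb N}\sup_{x\neq y}|\Phi_k(x)-\Phi_k(y)|/d(x,y)^\beta$, $\|\Phi\|=|\Phi|_\infty+|\Phi|_\beta$, $\mathcal C=\{\Phi\in C(\Omega):\|\Phi\|<\infty\}$. An inverse branch of order $k$ is a choice $\zeta=(\zeta_j)_{|j|\le k}$ of inverse branches of $\tau$, with $(\zeta_x)_j=\zeta_j(x_j)$ for $|j|\le k$, $(\zeta_x)_j=x_j$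 otherwise; $b_k=b^{2k+1}$. For a fixed real potential $f_0\in\mathcal C$, $P_k\Phi(x)=b_k^{-1}\sum_{|\zeta|=k}e^{f_0(\pi_k\zeta_x)}\Phi(\pi_k\zeta_x)$ and $P\Phi=\lim_kP_k\Phi$ pointwise. Fix a Borel probability measure $\nu_0$ with $P^*\nu_0=\lambda\nu_0$, $\lambda=\int P\mathbf 1\,d\nu_0$, and let $h\in\mathcal C$ be the unique strictly positive function with $Ph=\lambda h$, $\nu_0(h)=1$, $h(x)\le \exp\!\big(|f_0|_\beta\frac{\eta^\beta}{1-\eta^\beta}d(x,y)^\beta\big)h(y)$ for all $x,y$. Define $L\Phi=P(h\Phi)/(\lambda h)$. Let $\sigma$ be the shift $(\sigma x)_i=x_{i+1}$. Let $E:\Omega\to\Omega$ be invertible and suppose there is $C_E\in(0,\eta^{-1})$ with $d(\sigma^nE^{-1}x,\sigma^nE^{-1}y)\le C_E\,d(\sigma^nx,\sigma^ny)$ for all $n\in\mathbb Z$ and $x,y\in\Omega$. The coupled map is $T=E\circ\bar\tau$ and $\mathcal L\Phi(x)=L(\Phi)(E^{-1}x)$. (In the paper the observable $f$ here and the potential defining $P$ are both denoted $f$; the observable may be any element of $\mathcal C$.) *)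

theory Defs
  imports "HOL-Analysis.Analysis" "HOL-Probability.Probability"
begin

definition Iset :: "real set" where
  "Iset = {0..<1}"

definition Omega :: "(int \<Rightarrow> real) set" where
  "Omega = {x. \<forall>i. x i \<in> Iset}"

definition metric_on_I :: "(real \<Rightarrow> real \<Rightarrow> real) \<Rightarrow> bool" where
  "metric_on_I dI \<longleftrightarrow>
     (\<forall>s\<in>Iset. \<forall>t\<in>Iset. 0 \<le> dI s t \<and> (dI s t = 0 \<longleftrightarrow> s = t) \<and> dI s t = dI t s
        \<and> (\<forall>u\<in>Iset. dI s u \<le> dI s t + dI t u))"

definition dOm :: "real \<Rightarrow> (real \<Rightarrow> real \<Rightarrow> real) \<Rightarrow> (int \<Rightarrow> real) \<Rightarrow> (int \<Rightarrow> real) \<Rightarrow> real" where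
  "dOm \<theta> dI x y = (SUP k::int. \<theta> ^ nat \<bar>k\<bar> * dI (x k) (y k))"

definition Om_opens :: "real \<Rightarrow> (real \<Rightarrow> real \<Rightarrow> real) \<Rightarrow> (int \<Rightarrow> real) set set" where
  "Om_opens \<theta> dI = {U. U \<subseteq> Omega \<and>
       (\<forall>x\<in>U. \<exists>e>0. \<forall>y\<in>Omega. dOm \<theta> dI x y < e \<longrightarrow> y \<in> U)}"

definition shiftn :: "int \<Rightarrow> (int \<Rightarrow> real) \<Rightarrow> (int \<Rightarrow> real)" where
  "shiftn n x = (\<lambda>i. x (i + n))"

definition piK :: "real \<Rightarrow> nat \<Rightarrow> (int \<Rightarrow> real) \<Rightarrow> (int \<Rightarrow> real)" where
  "piK p k x = (\<lambda>i. if \<bar>i\<bar> \<le> int k then x i else p)"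

definition cont_Om :: "real \<Rightarrow> (real \<Rightarrow> real \<Rightarrow> real) \<Rightarrow> ((int \<Rightarrow> real) \<Rightarrow> 'a::real_normed_vector) \<Rightarrow> bool" where
  "cont_Om \<theta> dI \<Phi> \<longleftrightarrow> (\<forall>x\<in>Omega. \<forall>e>0. \<exists>\<delta>>0. \<forall>y\<in>Omega.
       dOm \<theta> dI x y < \<delta> \<longrightarrow> norm (\<Phi> y - \<Phi> x) < e)"

definition sup_norm :: "((int \<Rightarrow> real) \<Rightarrow> 'a::real_normed_vector) \<Rightarrow> real" where
  "sup_norm \<Phi> = (SUP x\<in>Omega. norm (\<Phi> x))"

definition hol_quot :: "real \<Rightarrow> (real \<Rightarrow> real \<Rightarrow> real) \<Rightarrow> real \<Rightarrow> real \<Rightarrow>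
    ((int \<Rightarrow> real) \<Rightarrow> 'a::real_normed_vector) \<Rightarrow> real set" where
  "hol_quot \<theta> dI p \<beta> \<Phi> = {norm (\<Phi> (piK p k x) - \<Phi> (piK p k y)) / (dOm \<theta> dI x y) powr \<beta>
       | k x y. x \<in> Omega \<and> y \<in> Omega \<and> x \<noteq> y}"

definition hol_semi :: "real \<Rightarrow> (real \<Rightarrow> real \<Rightarrow> real) \<Rightarrow> real \<Rightarrow> real \<Rightarrow>
    ((int \<Rightarrow> real) \<Rightarrow> 'a::real_normed_vector) \<Rightarrow> real" where
  "hol_semi \<theta> dI p \<beta> \<Phi> = Sup (hol_quot \<theta> dI p \<beta> \<Phi>)"

definition inC :: "real \<Rightarrow> (real \<Rightarrow> real \<Rightarrow> real) \<Rightarrow> real \<Rightarrow> real \<Rightarrow>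
    ((int \<Rightarrow> real) \<Rightarrow> 'a::real_normed_vector) \<Rightarrow> bool" where
  "inC \<theta> dI p \<beta> \<Phi> \<longleftrightarrow> cont_Om \<theta> dI \<Phi> \<and> bdd_above ((\<lambda>x. norm (\<Phi> x)) ` Omega)
      \<and> bdd_above (hol_quot \<theta> dI p \<beta> \<Phi>)"

definition Cnorm :: "real \<Rightarrow> (real \<Rightarrow> real \<Rightarrow> real) \<Rightarrow> real \<Rightarrow> real \<Rightarrow>
    ((int \<Rightarrow> real) \<Rightarrow> 'a::real_normed_vector) \<Rightarrow> real" where
  "Cnorm \<theta> dI p \<beta> \<Phi> = sup_norm \<Phi> + hol_semi \<theta> dI p \<beta> \<Phi>"

text \<open>The inverse branches of tau are zeta j, j < b. An inverse branch of order k is a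
  choice c : {-k..k} -> {..<b}.\<close>
definition branch_choices :: "nat \<Rightarrow> nat \<Rightarrow> (int \<Rightarrow> nat) set" where
  "branch_choices b k = PiE {- int k .. int k} (\<lambda>_. {..<b})"

definition zeta_x :: "(nat \<Rightarrow> real \<Rightarrow> real) \<Rightarrow> nat \<Rightarrow> (int \<Rightarrow> nat) \<Rightarrow> (int \<Rightarrow> real) \<Rightarrow> (int \<Rightarrow> real)" where
  "zeta_x \<zeta> k c x = (\<lambda>i. if \<bar>i\<bar> \<le> int k then \<zeta> (c i) (x i) else x i)"

definition Pk :: "nat \<Rightarrow> (nat \<Rightarrow> real \<Rightarrow> real) \<Rightarrow> ((int \<Rightarrow> real) \<Rightarrow> real) \<Rightarrow> real \<Rightarrow> nat \<Rightarrow>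
    ((int \<Rightarrow> real) \<Rightarrow> 'a::real_normed_vector) \<Rightarrow> (int \<Rightarrow> real) \<Rightarrow> 'a" where
  "Pk b \<zeta> f0 p k \<Phi> x = (1 / real b ^ (2 * k + 1)) *\<^sub>R
     (\<Sum>c\<in>branch_choices b k. exp (f0 (piK p k (zeta_x \<zeta> k c x))) *\<^sub>R \<Phi> (piK p k (zeta_x \<zeta> k c x)))"

definition Pop :: "nat \<Rightarrow> (nat \<Rightarrow> real \<Rightarrow> real) \<Rightarrow> ((int \<Rightarrow> real) \<Rightarrow> real) \<Rightarrow> real \<Rightarrow>
    ((int \<Rightarrow> real) \<Rightarrow> 'a::real_normed_vector) \<Rightarrow> (int \<Rightarrow> real) \<Rightarrow> 'a" where
  "Pop b \<zeta> f0 p \<Phi> x = lim (\<lambda>k. Pk b \<zeta> f0 p k \<Phi> x)"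

definition Lop :: "nat \<Rightarrow> (nat \<Rightarrow> real \<Rightarrow> real) \<Rightarrow> ((int \<Rightarrow> real) \<Rightarrow> real) \<Rightarrow> real \<Rightarrow>
    ((int \<Rightarrow> real) \<Rightarrow> real) \<Rightarrow> real \<Rightarrow>
    ((int \<Rightarrow> real) \<Rightarrow> 'a::real_normed_vector) \<Rightarrow> (int \<Rightarrow> real) \<Rightarrow> 'a" where
  "Lop b \<zeta> f0 p h lam \<Phi> x = (1 / (lam * h x)) *\<^sub>R Pop b \<zeta> f0 p (\<lambda>y. h y *\<^sub>R \<Phi> y) x"

definition calL :: "nat \<Rightarrow> (nat \<Rightarrow> real \<Rightarrow> real) \<Rightarrow> ((int \<Rightarrow> real) \<Rightarrow> real) \<Rightarrow> real \<Rightarrow>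
    ((int \<Rightarrow> real) \<Rightarrow> real) \<Rightarrow> real \<Rightarrow> ((int \<Rightarrow> real) \<Rightarrow> (int \<Rightarrow> real)) \<Rightarrow>
    ((int \<Rightarrow> real) \<Rightarrow> 'a::real_normed_vector) \<Rightarrow> (int \<Rightarrow> real) \<Rightarrow> 'a" where
  "calL b \<zeta> f0 p h lam Einv \<Phi> x = Lop b \<zeta> f0 p h lam \<Phi> (Einv x)"

definition Lft :: "nat \<Rightarrow> (nat \<Rightarrow> real \<Rightarrow> real) \<Rightarrow> ((int \<Rightarrow> real) \<Rightarrow> real) \<Rightarrow> real \<Rightarrow>
    ((int \<Rightarrow> real) \<Rightarrow> real) \<Rightarrow> real \<Rightarrow> ((int \<Rightarrow> real) \<Rightarrow> (int \<Rightarrow> real)) \<Rightarrow>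
    ((int \<Rightarrow> real) \<Rightarrow> real) \<Rightarrow> real \<Rightarrow>
    ((int \<Rightarrow> real) \<Rightarrow> complex) \<Rightarrow> (int \<Rightarrow> real) \<Rightarrow> complex" where
  "Lft b \<zeta> f0 p h lam Einv f t \<Phi> =
     calL b \<zeta> f0 p h lam Einv (\<lambda>y. exp (\<i> * complex_of_real (t * f y)) * \<Phi> y)"

end

theory Submission
  imports Defs
begin

(* The argument is a Lasota-Yorke inequality.  Write |.|_oo for the sup norm,
   |.|_b for the truncated Hoelder seminorm and K for an explicit constant.
   (1) L does not increase the sup norm: it averages Phi with the positive weights
       e^{f0} h / (lam h), whose total mass is 1 because P h = lam h; as |e^{itf}| = 1
       and E^{-1} only relabels points, also |L_{f,t} Phi|_oo <= |Phi|_oo.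
   (2) Every inverse branch contracts d by eta and E^{-1} expands it by at most CE, so
       |L_{f,t} Phi|_b <= CE^beta (eta^beta (|Phi|_b + |t| |f|_b |Phi|_oo) + K |Phi|_oo).
   Since rho = (CE eta)^beta < 1, the bound |Phi|_b + A |Phi|_oo / (1 - rho) is
   invariant under (2), which gives ||L_{f,t}^n|| <= 1 + A / (1 - rho) for all n and
   all |t| < 1.
   The file first collects elementary real inequalities, then the metric geometry of
   Omega (locale branch_system), the calculus of truncated Hoelder bounds and the
   convergence of the finite approximations P_k; the estimates (1), (2) are proved for
   the normalised operator (locale normalised_operator), iterated for the twisted
   operator, and the theorem follows by instantiating the locales. *)

lemma sum_PiE_insert:
  fixes Q :: "('i \<Rightarrow> 'b) \<Rightarrow> 'c::real_vector"
  assumes "x \<notin> S" "\<And>g y. Q (g(x := y)) = Q g"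
  shows "sum Q (PiE (insert x S) T) = real (card (T x)) *\<^sub>R sum Q (PiE S T)"
proof -
  have "sum Q (PiE (insert x S) T) = sum (Q \<circ> (\<lambda>(y, g). g(x := y))) (T x \<times> PiE S T)"
    unfolding PiE_insert_eq by (rule sum.reindex[OF inj_combinator[OF assms(1)]])
  also have "\<dots> = sum (\<lambda>(y,g). Q g) (T x \<times> PiE S T)"
    by (rule sum.cong) (auto simp: assms(2))
  also have "\<dots> = real (card (T x)) *\<^sub>R sum Q (PiE S T)"
    by (simp add: sum.cartesian_product[symmetric] sum_constant_scaleR)
  finally show ?thesis .
qed

lemma convergent_if_increments_summable:
  fixes a :: "nat \<Rightarrow> 'a::banach"
  assumes "\<And>k. norm (a (Suc k) - a k) \<le> r k" "summable r"
  shows "convergent a"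
proof -
  have "summable (\<lambda>k. a (Suc k) - a k)"
    by (rule summable_comparison_test'[OF assms(2)]) (rule assms(1))
  then have "(\<lambda>n. a n - a 0) \<longlonglongrightarrow> suminf (\<lambda>k. a (Suc k) - a k)"
    using summable_LIMSEQ by (fastforce simp: sum_lessThan_telescope)
  then have "(\<lambda>n. (a n - a 0) + a 0) \<longlonglongrightarrow> suminf (\<lambda>k. a (Suc k) - a k) + a 0"
    by (intro tendsto_add) auto
  then show ?thesis by (auto simp: convergent_def)
qed

lemma power_powr_real: "0 \<le> (x::real) \<Longrightarrow> (x ^ n) powr a = (x powr a) ^ n"
  by (induction n) (simp_all add: powr_mult)

lemma iexp_lipschitz: "cmod (iexp a - iexp b) \<le> \<bar>a - b\<bar>"
proof -
  have "iexp a - iexp b = iexp b * (iexp (a - b) - 1)"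
    by (simp add: algebra_simps exp_add[symmetric])
  then show ?thesis using iexp_approx1[of "a - b" 0] by (simp add: norm_mult)
qed

lemma exp_diff_le: "(a::real) \<le> b \<Longrightarrow> exp b - exp a \<le> exp b * (b - a)"
proof -
  assume "a \<le> b"
  have "exp b * (1 + (a - b)) \<le> exp b * exp (a - b)"
    by (intro mult_left_mono) auto
  then show ?thesis by (simp add: exp_diff algebra_simps)
qed

lemma exp_lipschitz_bounded:
  fixes a b M :: real
  assumes "\<bar>a\<bar> \<le> M" "\<bar>b\<bar> \<le> M"
  shows "\<bar>exp a - exp b\<bar> \<le> exp M * \<bar>a - b\<bar>"
proof -
  have "exp v - exp u \<le> exp M * (v - u)" if "u \<le> v" "v \<le> M" for u v :: real
    using exp_diff_le[OF that(1)] that by (meson diff_ge_0_iff_ge exp_le_cancel_iff mult_right_mono order_trans)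
  from this[of a b] this[of b a] assms show ?thesis
    by (cases "a \<le> b") (auto simp: abs_le_iff)
qed

lemma reciprocal_diff_bound:
  fixes lam hm hu hv :: real
  assumes "0 < lam" "0 < hm" "hm \<le> hu" "hm \<le> hv"
  shows "\<bar>1/(lam*hu) - 1/(lam*hv)\<bar> \<le> \<bar>hu - hv\<bar> / (lam*hm^2)"
proof -
  have pos: "0 < hu" "0 < hv" using assms by auto
  have "\<bar>1/(lam*hu) - 1/(lam*hv)\<bar> = \<bar>hu - hv\<bar> / (lam * (hu * hv))"
    using pos assms by (simp add: field_simps abs_minus_commute)
  also have "\<dots> \<le> \<bar>hu - hv\<bar> / (lam*hm^2)"
  proof (rule divide_left_mono)
    have "hm * hm \<le> hu * hv" using assms by (intro mult_mono) auto
    then show "lam * hm ^ 2 \<le> lam * (hu * hv)" using assms by (simp add: power2_eq_square)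
  qed (use assms pos in simp_all)
  finally show ?thesis .
qed

text \<open>Variation of a quotient ga / (lam hu) in terms of the variations of numerator
  and denominator; this is the Hoelder estimate for the normalised weights of L.\<close>
lemma quotient_diff_bound:
  fixes lam hm hu hv ga ga' Mg Sg Hd D :: real
  assumes "0 < lam" "0 < hm" "hm \<le> hu" "hm \<le> hv" "0 \<le> ga'" "ga' \<le> Mg"
    "\<bar>ga - ga'\<bar> \<le> Sg * D" "\<bar>hu - hv\<bar> \<le> Hd * D" "0 \<le> D"
  shows "\<bar>ga/(lam*hu) - ga'/(lam*hv)\<bar> \<le> (Sg/(lam*hm) + Mg*Hd/(lam*hm^2)) * D"
proof -
  have pos: "0 < hu" "0 < hv" using assms by auto
  have split: "ga/(lam*hu) - ga'/(lam*hv) = (ga - ga') * (1/(lam*hu)) + ga' * (1/(lam*hu) - 1/(lam*hv))"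
    using pos assms(1) by (simp add: field_simps)
  have numerator: "\<bar>(ga - ga') * (1/(lam*hu))\<bar> \<le> (Sg * D) * (1/(lam*hm))"
  proof -
    have "\<bar>ga - ga'\<bar> / (lam * hu) \<le> (Sg * D) / (lam * hm)"
      using assms by (intro frac_le mult_left_mono) auto
    then show ?thesis using assms pos by (simp add: abs_mult)
  qed
  have denominator: "\<bar>ga' * (1/(lam*hu) - 1/(lam*hv))\<bar> \<le> Mg * ((Hd * D) / (lam*hm^2))"
  proof -
    have "\<bar>1/(lam*hu) - 1/(lam*hv)\<bar> \<le> (Hd * D) / (lam*hm^2)"
      using reciprocal_diff_bound[OF assms(1-4)] assms
      by (meson divide_right_mono order_trans zero_le_power2 mult_nonneg_nonneg less_imp_le)
    then have "ga' * \<bar>1/(lam*hu) - 1/(lam*hv)\<bar> \<le> Mg * ((Hd * D) / (lam*hm^2))"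
      using assms(5,6) by (intro mult_mono) auto
    then show ?thesis using assms(5) by (simp add: abs_mult)
  qed
  have "\<bar>ga/(lam*hu) - ga'/(lam*hv)\<bar> \<le> (Sg * D) * (1/(lam*hm)) + Mg * ((Hd * D) / (lam*hm^2))"
    unfolding split using numerator denominator abs_triangle_ineq by (meson add_mono order_trans)
  also have "\<dots> = (Sg/(lam*hm) + Mg*Hd/(lam*hm^2)) * D" by (simp add: field_simps)
  finally show ?thesis .
qed

text \<open>If a quantity x satisfies x \<le> S + B/(1 - rho) with 0 \<le> rho < 1, so does
  rho x + B: the bound S + B/(1 - rho) is invariant under one Lasota-Yorke step.\<close>
lemma contraction_invariant_bound:
  fixes rho x S B :: real
  assumes "0 \<le> rho" "rho < 1" "0 \<le> S" "x \<le> S + B / (1 - rho)"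
  shows "rho * x + B \<le> S + B / (1 - rho)"
proof -
  have "rho * x + B \<le> rho * (S + B / (1 - rho)) + B"
    using assms by (intro add_right_mono mult_left_mono) auto
  also have "\<dots> = rho * S + B / (1 - rho)"
    using assms(2) by (simp add: field_simps)
  also have "\<dots> \<le> S + B / (1 - rho)"
    using assms by (simp add: mult_left_le_one_le)
  finally show ?thesis .
qed

subsection \<open>The metric geometry of Omega\<close>

text \<open>The data of the symbolic space: a bounded metric dI on I (diameter \<le> Bd),
  the weights theta, the Hoelder exponent beta, the fixed point p used by the
  truncations piK, and b inverse branches zeta j contracting dI by eta.\<close>
locale branch_system =
  fixes dI :: "real \<Rightarrow> real \<Rightarrow> real" and \<theta> \<eta> \<beta> p Bd :: real
    and b :: nat and \<zeta> :: "nat \<Rightarrow> real \<Rightarrow> real"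
  assumes dI_metric: "metric_on_I dI"
    and diam: "\<forall>s\<in>Iset. \<forall>t\<in>Iset. dI s t \<le> Bd"
    and theta: "0 < \<theta>" "\<theta> < 1"
    and eta: "0 < \<eta>" "\<eta> < 1"
    and beta: "0 < \<beta>" "\<beta> \<le> 1"
    and p_in_I: "p \<in> Iset" and b_pos: "0 < b"
    and branch_in_I: "\<forall>j<b. \<forall>s\<in>Iset. \<zeta> j s \<in> Iset"
    and contract: "\<forall>j<b. \<forall>s\<in>Iset. \<forall>t\<in>Iset. dI (\<zeta> j s) (\<zeta> j t) \<le> \<eta> * dI s t"
begin

abbreviation "d \<equiv> dOm \<theta> dI"

lemma dI_nonneg: "s \<in> Iset \<Longrightarrow> t \<in> Iset \<Longrightarrow> 0 \<le> dI s t"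
  and dI_self: "s \<in> Iset \<Longrightarrow> dI s s = 0"
  and dI_eq_0_iff: "s \<in> Iset \<Longrightarrow> t \<in> Iset \<Longrightarrow> dI s t = 0 \<longleftrightarrow> s = t"
  and dI_sym: "s \<in> Iset \<Longrightarrow> t \<in> Iset \<Longrightarrow> dI s t = dI t s"
  using dI_metric unfolding metric_on_I_def by blast+

lemma diam_nonneg: "0 \<le> Bd"
  using diam dI_self[OF p_in_I] p_in_I by force

lemma Omega_coord: "x \<in> Omega \<Longrightarrow> x i \<in> Iset"
  by (simp add: Omega_def)

lemma const_p_in_Omega: "(\<lambda>_. p) \<in> Omega"
  using p_in_I by (simp add: Omega_def)

lemma Omega_two_points: "\<exists>x\<in>Omega. \<exists>y\<in>Omega. x \<noteq> y"
proof -
  have "(\<lambda>_::int. 0::real) \<in> Omega" "(\<lambda>_::int. 1/2::real) \<in> Omega"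
    by (auto simp: Omega_def Iset_def)
  moreover have "(\<lambda>_::int. 0::real) \<noteq> (\<lambda>_. 1/2)" by (simp add: fun_eq_iff)
  ultimately show ?thesis by blast
qed

lemma theta_power: "0 < \<theta> ^ nat \<bar>k\<bar>" "\<theta> ^ nat \<bar>k\<bar> \<le> 1"
  using theta by (auto simp: power_le_one)

lemma d_term_bounds:
  assumes "x \<in> Omega" "y \<in> Omega"
  shows "0 \<le> \<theta> ^ nat \<bar>k\<bar> * dI (x k) (y k)" "\<theta> ^ nat \<bar>k\<bar> * dI (x k) (y k) \<le> Bd"
proof -
  have coord: "0 \<le> dI (x k) (y k)" "dI (x k) (y k) \<le> Bd"
    using dI_nonneg diam Omega_coord assms by auto
  then show "0 \<le> \<theta> ^ nat \<bar>k\<bar> * dI (x k) (y k)"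
    using theta_power(1)[of k] by simp
  have "\<theta> ^ nat \<bar>k\<bar> * dI (x k) (y k) \<le> 1 * dI (x k) (y k)"
    using coord theta_power by (intro mult_right_mono) auto
  then show "\<theta> ^ nat \<bar>k\<bar> * dI (x k) (y k) \<le> Bd" using coord by simp
qed

lemma d_coord_le:
  assumes "x \<in> Omega" "y \<in> Omega"
  shows "\<theta> ^ nat \<bar>k\<bar> * dI (x k) (y k) \<le> d x y"
  unfolding dOm_def
  by (rule cSUP_upper) (auto intro!: bdd_aboveI2 d_term_bounds assms)

lemma d_le_if_coords_le:
  assumes "\<And>k. \<theta> ^ nat \<bar>k\<bar> * dI (x k) (y k) \<le> r"
  shows "d x y \<le> r"
  unfolding dOm_def by (rule cSUP_least) (auto intro: assms)

lemma d_nonneg: "x \<in> Omega \<Longrightarrow> y \<in> Omega \<Longrightarrow> 0 \<le> d x y"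
  using d_coord_le[of x y 0] d_term_bounds[of x y 0] by linarith

lemma d_le_diam: "x \<in> Omega \<Longrightarrow> y \<in> Omega \<Longrightarrow> d x y \<le> Bd"
  by (rule d_le_if_coords_le) (rule d_term_bounds)

lemma d_self: "x \<in> Omega \<Longrightarrow> d x x = 0"
  using d_nonneg[of x x] d_le_if_coords_le[of x x 0] by (simp add: dI_self Omega_coord)

lemma d_pos: "x \<in> Omega \<Longrightarrow> y \<in> Omega \<Longrightarrow> x \<noteq> y \<Longrightarrow> 0 < d x y"
proof -
  assume xy: "x \<in> Omega" "y \<in> Omega" "x \<noteq> y"
  then obtain k where "x k \<noteq> y k" by auto
  then have "dI (x k) (y k) \<noteq> 0" using dI_eq_0_iff Omega_coord xy by auto
  then have "0 < \<theta> ^ nat \<bar>k\<bar> * dI (x k) (y k)"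
    using dI_nonneg Omega_coord xy theta_power by (simp add: order_le_neq_trans)
  then show ?thesis using d_coord_le[OF xy(1,2), of k] by linarith
qed

lemma d_sym: "x \<in> Omega \<Longrightarrow> y \<in> Omega \<Longrightarrow> d x y = d y x"
  unfolding dOm_def using dI_sym Omega_coord by (metis (no_types, lifting))

lemma d_powr_le_diam: "x \<in> Omega \<Longrightarrow> y \<in> Omega \<Longrightarrow> d x y powr \<beta> \<le> Bd powr \<beta>"
  using d_nonneg d_le_diam beta by (intro powr_mono2) auto

lemma piK_in_Omega: "x \<in> Omega \<Longrightarrow> piK p k x \<in> Omega"
  using p_in_I by (simp add: Omega_def piK_def)

lemma piK_piK: "k \<le> m \<Longrightarrow> piK p m (piK p k x) = piK p k x"
  by (auto simp: piK_def fun_eq_iff)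

lemma d_piK_le: assumes "x \<in> Omega" "y \<in> Omega" shows "d (piK p k x) (piK p k y) \<le> d x y"
proof (rule d_le_if_coords_le)
  fix i
  show "\<theta> ^ nat \<bar>i\<bar> * dI (piK p k x i) (piK p k y i) \<le> d x y"
    using d_coord_le[OF assms, of i] d_nonneg[OF assms] by (auto simp: piK_def dI_self p_in_I)
qed

lemma branch_choice_lt: "c \<in> branch_choices b m \<Longrightarrow> k \<le> m \<Longrightarrow> \<bar>i\<bar> \<le> int k \<Longrightarrow> c i < b"
  unfolding branch_choices_def by (auto simp: PiE_iff abs_le_iff)

lemma zeta_x_in_Omega: "x \<in> Omega \<Longrightarrow> c \<in> branch_choices b m \<Longrightarrow> k \<le> m \<Longrightarrow> zeta_x \<zeta> k c x \<in> Omega"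
  using branch_in_I branch_choice_lt by (auto simp: Omega_def zeta_x_def)

lemma d_branch_contract:
  assumes "x \<in> Omega" "y \<in> Omega" "c \<in> branch_choices b k"
  shows "d (piK p k (zeta_x \<zeta> k c x)) (piK p k (zeta_x \<zeta> k c y)) \<le> \<eta> * d x y"
proof (rule d_le_if_coords_le)
  fix i
  show "\<theta> ^ nat \<bar>i\<bar> * dI (piK p k (zeta_x \<zeta> k c x) i) (piK p k (zeta_x \<zeta> k c y) i) \<le> \<eta> * d x y"
  proof (cases "\<bar>i\<bar> \<le> int k")
    case True
    have "dI (\<zeta> (c i) (x i)) (\<zeta> (c i) (y i)) \<le> \<eta> * dI (x i) (y i)"
      using contract branch_choice_lt[OF assms(3) order_refl True] Omega_coord assms by blast
    then have "\<theta> ^ nat \<bar>i\<bar> * dI (\<zeta> (c i) (x i)) (\<zeta> (c i) (y i)) \<le> \<eta> * (\<theta> ^ nat \<bar>i\<bar> * dI (x i) (y i))"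
      using theta_power(1)[of i] by (simp add: mult.left_commute)
    also have "\<dots> \<le> \<eta> * d x y" using d_coord_le[OF assms(1,2)] eta by (intro mult_left_mono) auto
    finally show ?thesis using True by (simp add: piK_def zeta_x_def)
  next
    case False
    then show ?thesis using d_nonneg[OF assms(1,2)] eta by (simp add: piK_def zeta_x_def dI_self p_in_I)
  qed
qed

text \<open>Passing from the branch of order k to that of order k+1 moves a point only in
  the coordinates \<plusminus>(k+1), hence by at most theta^(k+1) Bd.\<close>
lemma d_branch_order_step:
  assumes "x \<in> Omega" "c \<in> branch_choices b (Suc k)"
  shows "d (piK p (Suc k) (zeta_x \<zeta> (Suc k) c x)) (piK p k (zeta_x \<zeta> k c x)) \<le> \<theta> ^ Suc k * Bd"
proof (rule d_le_if_coords_le)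
  fix i :: int
  show "\<theta> ^ nat \<bar>i\<bar> * dI (piK p (Suc k) (zeta_x \<zeta> (Suc k) c x) i) (piK p k (zeta_x \<zeta> k c x) i) \<le> \<theta> ^ Suc k * Bd"
  proof (cases "\<bar>i\<bar> = int (Suc k)")
    case True
    have "\<zeta> (c i) (x i) \<in> Iset"
      using branch_in_I branch_choice_lt[OF assms(2) order_refl] True Omega_coord[OF assms(1)] by simp
    then have "dI (\<zeta> (c i) (x i)) p \<le> Bd" using diam p_in_I by blast
    moreover have "nat \<bar>i\<bar> = Suc k" using True by simp
    ultimately show ?thesis using True theta
      by (simp add: piK_def zeta_x_def mult_left_mono)
  next
    case False
    then have "dI (piK p (Suc k) (zeta_x \<zeta> (Suc k) c x) i) (piK p k (zeta_x \<zeta> k c x) i) = 0"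
      by (auto simp: piK_def zeta_x_def dI_self p_in_I
          intro!: dI_self branch_in_I[rule_format] branch_choice_lt[OF assms(2) order_refl] Omega_coord[OF assms(1)])
    then show ?thesis using diam_nonneg theta by simp
  qed
qed

end

subsection \<open>Truncated Hoelder bounds\<close>

text \<open>G admits the truncated Hoelder constant C: every truncation G \<circ> piK p m is
  beta-Hoelder with constant C.  The seminorm hol_semi is the least such C.\<close>
definition trunc_hoelder :: "real \<Rightarrow> (real \<Rightarrow> real \<Rightarrow> real) \<Rightarrow> real \<Rightarrow> real \<Rightarrow>
    ((int \<Rightarrow> real) \<Rightarrow> 'a::real_normed_vector) \<Rightarrow> real \<Rightarrow> bool" where
  "trunc_hoelder \<theta> dI p \<beta> G C \<longleftrightarrow> (\<forall>m. \<forall>x\<in>Omega. \<forall>y\<in>Omega.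
      norm (G (piK p m x) - G (piK p m y)) \<le> C * dOm \<theta> dI x y powr \<beta>)"

context branch_system
begin

abbreviation "hoelder \<equiv> trunc_hoelder \<theta> dI p \<beta>"

lemma hoelderD: "hoelder G C \<Longrightarrow> x \<in> Omega \<Longrightarrow> y \<in> Omega \<Longrightarrow>
   norm (G (piK p m x) - G (piK p m y)) \<le> C * d x y powr \<beta>"
  unfolding trunc_hoelder_def by blast

lemma hoelder_mono: "hoelder G C \<Longrightarrow> C \<le> C' \<Longrightarrow> hoelder G C'"
  unfolding trunc_hoelder_def by (meson d_nonneg mult_right_mono order_trans powr_ge_zero)

lemma hol_quot_le:
  assumes "hoelder G C" "q \<in> hol_quot \<theta> dI p \<beta> G"
  shows "q \<le> C"
proof -
  obtain k x y where q: "q = norm (G (piK p k x) - G (piK p k y)) / d x y powr \<beta>"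
    and xy: "x \<in> Omega" "y \<in> Omega" "x \<noteq> y"
    using assms(2) unfolding hol_quot_def by blast
  have "0 < d x y powr \<beta>" using d_pos[OF xy] by simp
  then show "q \<le> C" using hoelderD[OF assms(1) xy(1,2)] by (simp add: q divide_le_eq)
qed

lemma hol_quot_nonempty: "hol_quot \<theta> dI p \<beta> G \<noteq> {}"
  unfolding hol_quot_def using Omega_two_points by blast

lemma hol_quot_nonneg: "q \<in> hol_quot \<theta> dI p \<beta> G \<Longrightarrow> 0 \<le> q"
  unfolding hol_quot_def by auto

lemma inC_hoelder: assumes "inC \<theta> dI p \<beta> G" shows "hoelder G (hol_semi \<theta> dI p \<beta> G)"
  unfolding trunc_hoelder_def
proof (intro allI ballI)
  fix m x y assume xy: "x \<in> Omega" "y \<in> Omega"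
  show "norm (G (piK p m x) - G (piK p m y)) \<le> hol_semi \<theta> dI p \<beta> G * d x y powr \<beta>"
  proof (cases "x = y")
    case True then show ?thesis using xy by (simp add: d_self)
  next
    case False
    have pos: "0 < d x y powr \<beta>" using d_pos[OF xy False] by simp
    have "norm (G (piK p m x) - G (piK p m y)) / d x y powr \<beta> \<in> hol_quot \<theta> dI p \<beta> G"
      unfolding hol_quot_def using xy False by blast
    then have "norm (G (piK p m x) - G (piK p m y)) / d x y powr \<beta> \<le> hol_semi \<theta> dI p \<beta> G"
      unfolding hol_semi_def using assms unfolding inC_def by (intro cSup_upper) auto
    then show ?thesis using pos by (simp add: divide_le_eq)
  qed
qed

lemma hol_semi_nonneg: assumes "inC \<theta> dI p \<beta> G" shows "0 \<le> hol_semi \<theta> dI p \<beta> G"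
proof -
  obtain q where q: "q \<in> hol_quot \<theta> dI p \<beta> G" using hol_quot_nonempty by blast
  have "q \<le> hol_semi \<theta> dI p \<beta> G"
    unfolding hol_semi_def using assms q unfolding inC_def by (intro cSup_upper) auto
  then show ?thesis using hol_quot_nonneg[OF q] by linarith
qed

lemma inC_sup_bound: assumes "inC \<theta> dI p \<beta> G" "x \<in> Omega" shows "norm (G x) \<le> sup_norm G"
  unfolding sup_norm_def using assms unfolding inC_def by (intro cSUP_upper) auto

lemma hoelder_mult:
  fixes g G :: "(int \<Rightarrow> real) \<Rightarrow> 'a::real_normed_algebra"
  assumes "hoelder g S1" "\<forall>x\<in>Omega. norm (g x) \<le> M1"
    "hoelder G S2" "\<forall>x\<in>Omega. norm (G x) \<le> M2"
  shows "hoelder (\<lambda>x. g x * G x) (M1 * S2 + M2 * S1)"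
  unfolding trunc_hoelder_def
proof (intro allI ballI)
  fix m x y assume xy: "x \<in> Omega" "y \<in> Omega"
  let ?a = "piK p m x" and ?b = "piK p m y" and ?D = "d x y powr \<beta>"
  have ab: "?a \<in> Omega" "?b \<in> Omega" using xy piK_in_Omega by auto
  have M1: "0 \<le> M1" using assms(2) ab by (meson norm_ge_zero order_trans)
  have "g ?a * G ?a - g ?b * G ?b = g ?a * (G ?a - G ?b) + (g ?a - g ?b) * G ?b"
    by (simp add: algebra_simps)
  then have "norm (g ?a * G ?a - g ?b * G ?b) \<le> norm (g ?a * (G ?a - G ?b)) + norm ((g ?a - g ?b) * G ?b)"
    by (simp only: norm_triangle_ineq)
  also have "\<dots> \<le> norm (g ?a) * norm (G ?a - G ?b) + norm (g ?a - g ?b) * norm (G ?b)"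
    by (intro add_mono norm_mult_ineq)
  also have "\<dots> \<le> M1 * (S2 * ?D) + (S1 * ?D) * M2"
  proof (rule add_mono)
    show "norm (g ?a) * norm (G ?a - G ?b) \<le> M1 * (S2 * ?D)"
      using assms(2) hoelderD[OF assms(3) xy] ab M1 by (intro mult_mono) auto
    show "norm (g ?a - g ?b) * norm (G ?b) \<le> (S1 * ?D) * M2"
      using assms(4) hoelderD[OF assms(1) xy] ab by (intro mult_mono) (auto intro: order_trans[OF norm_ge_zero])
  qed
  finally show "norm (g ?a * G ?a - g ?b * G ?b) \<le> (M1 * S2 + M2 * S1) * ?D"
    by (simp add: algebra_simps)
qed

lemma hoelder_of_real: "hoelder g S \<Longrightarrow> hoelder (\<lambda>x. of_real (g x) :: 'a::real_normed_algebra_1) S"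
  unfolding trunc_hoelder_def by (simp add: of_real_diff[symmetric] del: of_real_diff)

lemma hoelder_exp:
  fixes f :: "(int \<Rightarrow> real) \<Rightarrow> real"
  assumes "hoelder f S" "\<forall>x\<in>Omega. \<bar>f x\<bar> \<le> M"
  shows "hoelder (\<lambda>x. exp (f x)) (exp M * S)"
  unfolding trunc_hoelder_def
proof (intro allI ballI)
  fix m x y assume xy: "x \<in> Omega" "y \<in> Omega"
  let ?a = "piK p m x" and ?b = "piK p m y"
  have "\<bar>exp (f ?a) - exp (f ?b)\<bar> \<le> exp M * \<bar>f ?a - f ?b\<bar>"
    using exp_lipschitz_bounded assms(2) xy piK_in_Omega by blast
  also have "\<dots> \<le> exp M * (S * d x y powr \<beta>)"
    using hoelderD[OF assms(1) xy] by (intro mult_left_mono) auto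
  finally show "norm (exp (f ?a) - exp (f ?b)) \<le> exp M * S * d x y powr \<beta>" by simp
qed

lemma hoelder_iexp:
  fixes f :: "(int \<Rightarrow> real) \<Rightarrow> real"
  assumes "hoelder f S"
  shows "hoelder (\<lambda>x. iexp (t * f x)) (\<bar>t\<bar> * S)"
  unfolding trunc_hoelder_def
proof (intro allI ballI)
  fix m x y assume xy: "x \<in> Omega" "y \<in> Omega"
  let ?a = "piK p m x" and ?b = "piK p m y"
  have "norm (iexp (t * f ?a) - iexp (t * f ?b)) \<le> \<bar>t\<bar> * \<bar>f ?a - f ?b\<bar>"
    using iexp_lipschitz[of "t * f ?a" "t * f ?b"] by (simp add: abs_mult[symmetric] algebra_simps)
  also have "\<dots> \<le> \<bar>t\<bar> * (S * d x y powr \<beta>)"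
    using hoelderD[OF assms xy] by (intro mult_left_mono) auto
  finally show "norm (iexp (t * f ?a) - iexp (t * f ?b)) \<le> \<bar>t\<bar> * S * d x y powr \<beta>"
    by simp
qed

text \<open>A globally beta-Hoelder function has the same truncated Hoelder constant,
  because the truncations piK p m do not increase d.\<close>
lemma global_hoelder_imp_hoelder:
  fixes G :: "(int \<Rightarrow> real) \<Rightarrow> 'a::real_normed_vector"
  assumes G: "\<forall>u\<in>Omega. \<forall>v\<in>Omega. norm (G u - G v) \<le> S * d u v powr \<beta>" and S: "0 \<le> S"
  shows "hoelder G S"
  unfolding trunc_hoelder_def
proof (intro allI ballI)
  fix m x y assume xy: "x \<in> Omega" "y \<in> Omega"
  have "norm (G (piK p m x) - G (piK p m y)) \<le> S * d (piK p m x) (piK p m y) powr \<beta>"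
    using G piK_in_Omega xy by blast
  also have "\<dots> \<le> S * d x y powr \<beta>"
    using S d_piK_le[OF xy] d_nonneg piK_in_Omega xy beta by (intro mult_left_mono powr_mono2) auto
  finally show "norm (G (piK p m x) - G (piK p m y)) \<le> S * d x y powr \<beta>" .
qed

lemma global_hoelder_imp_cont:
  fixes G :: "(int \<Rightarrow> real) \<Rightarrow> 'a::real_normed_vector"
  assumes G: "\<forall>u\<in>Omega. \<forall>v\<in>Omega. norm (G u - G v) \<le> S * d u v powr \<beta>" and S: "0 \<le> S"
  shows "cont_Om \<theta> dI G"
  unfolding cont_Om_def
proof (intro ballI allI impI)
  fix x :: "int \<Rightarrow> real" and e :: real assume x: "x \<in> Omega" and e: "0 < e"
  define \<delta> where "\<delta> = (e / (S + 1)) powr (1 / \<beta>)"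
  have \<delta>_pow: "\<delta> powr \<beta> = e / (S + 1)"
    using e S beta by (simp add: \<delta>_def powr_powr)
  show "\<exists>\<delta>>0. \<forall>y\<in>Omega. d x y < \<delta> \<longrightarrow> norm (G y - G x) < e"
  proof (intro exI conjI ballI impI)
    show "0 < \<delta>" using e S by (simp add: \<delta>_def)
    fix y assume y: "y \<in> Omega" and dy: "d x y < \<delta>"
    have "norm (G y - G x) \<le> S * d x y powr \<beta>" using G[rule_format, OF y x] d_sym[OF x y] by simp
    also have "\<dots> \<le> S * (e / (S + 1))"
      using dy d_nonneg[OF x y] beta S \<delta>_pow by (intro mult_left_mono) (metis less_imp_le powr_mono2)
    also have "\<dots> < e" using S e by (simp add: field_simps)
    finally show "norm (G y - G x) < e" .
  qed
qed

lemma global_hoelder_inC: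
  fixes G :: "(int \<Rightarrow> real) \<Rightarrow> 'a::real_normed_vector"
  assumes G: "\<forall>u\<in>Omega. \<forall>v\<in>Omega. norm (G u - G v) \<le> S * d u v powr \<beta>" and S: "0 \<le> S"
    and M: "\<forall>x\<in>Omega. norm (G x) \<le> M"
  shows "inC \<theta> dI p \<beta> G" "hol_semi \<theta> dI p \<beta> G \<le> S" "sup_norm G \<le> M"
proof -
  have hoelder: "hoelder G S" by (rule global_hoelder_imp_hoelder[OF G S])
  have "bdd_above (hol_quot \<theta> dI p \<beta> G)"
    using hol_quot_le[OF hoelder] by (intro bdd_aboveI) blast
  moreover have "bdd_above ((\<lambda>x. norm (G x)) ` Omega)" using M by (auto intro: bdd_aboveI)
  ultimately show "inC \<theta> dI p \<beta> G"
    unfolding inC_def using global_hoelder_imp_cont[OF G S] by blast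
  show "hol_semi \<theta> dI p \<beta> G \<le> S"
    unfolding hol_semi_def using hol_quot_nonempty hol_quot_le[OF hoelder] by (intro cSup_least) auto
  show "sup_norm G \<le> M"
    unfolding sup_norm_def using const_p_in_Omega M by (intro cSUP_least) auto
qed

end

subsection \<open>Convergence of the finite-order approximations P_k\<close>

lemma branch_choices_card: "card (branch_choices b k) = b ^ (2 * k + 1)"
proof -
  have "card {- int k..int k} = 2 * k + 1" by simp
  then show ?thesis unfolding branch_choices_def by (simp add: card_PiE)
qed

lemma branch_choices_Suc: "branch_choices b (Suc k) =
   PiE (insert (int k + 1) (insert (- (int k + 1)) {- int k..int k})) (\<lambda>_. {..<b})"
proof -
  have "{- int (Suc k)..int (Suc k)} = insert (int k + 1) (insert (- (int k + 1)) {- int k..int k})"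
    by auto
  then show ?thesis unfolding branch_choices_def by simp
qed

lemma zeta_x_update: "int k < \<bar>i\<bar> \<Longrightarrow> zeta_x \<zeta> k (c(i := j)) u = zeta_x \<zeta> k c u"
  by (auto simp: zeta_x_def fun_eq_iff)

lemma sum_branch_choices_Suc:
  fixes F :: "(int \<Rightarrow> real) \<Rightarrow> 'c::real_vector"
  shows "(\<Sum>c\<in>branch_choices b (Suc k). F (zeta_x \<zeta> k c u)) =
         real (b ^ 2) *\<^sub>R (\<Sum>c\<in>branch_choices b k. F (zeta_x \<zeta> k c u))"
proof -
  let ?Q = "\<lambda>c. F (zeta_x \<zeta> k c u)"
  let ?T = "\<lambda>_::int. {..<b}"
  have outer: "sum ?Q (PiE (insert (int k + 1) (insert (- (int k + 1)) {- int k..int k})) ?T)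
     = real (card (?T (int k + 1))) *\<^sub>R sum ?Q (PiE (insert (- (int k + 1)) {- int k..int k}) ?T)"
    by (rule sum_PiE_insert) (auto simp: zeta_x_update)
  have inner: "sum ?Q (PiE (insert (- (int k + 1)) {- int k..int k}) ?T)
     = real (card (?T (- (int k + 1)))) *\<^sub>R sum ?Q (PiE {- int k..int k} ?T)"
    by (rule sum_PiE_insert) (auto simp: zeta_x_update)
  show ?thesis unfolding branch_choices_Suc outer inner
    by (simp add: branch_choices_def power2_eq_square)
qed

context branch_system
begin

lemma Pk_as_order_Suc_average:
  "Pk b \<zeta> f0 p k G u = (1 / real b ^ (2 * Suc k + 1)) *\<^sub>R
     (\<Sum>c\<in>branch_choices b (Suc k). exp (f0 (piK p k (zeta_x \<zeta> k c u))) *\<^sub>R G (piK p k (zeta_x \<zeta> k c u)))"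
proof -
  have N: "real b ^ (2 * Suc k + 1) = real (b ^ 2) * real b ^ (2 * k + 1)"
    by (simp add: power_add[symmetric])
  show ?thesis
    unfolding Pk_def sum_branch_choices_Suc[where F = "\<lambda>x. exp (f0 (piK p k x)) *\<^sub>R G (piK p k x)"] N
    using b_pos by simp
qed

lemma Pk_increment_bound:
  assumes H: "hoelder (\<lambda>x. exp (f0 x) *\<^sub>R G x) C" and C: "0 \<le> C" and u: "u \<in> Omega"
  shows "norm (Pk b \<zeta> f0 p (Suc k) G u - Pk b \<zeta> f0 p k G u) \<le> C * Bd powr \<beta> * (\<theta> powr \<beta>) ^ Suc k"
proof -
  define H where "H = (\<lambda>x. exp (f0 x) *\<^sub>R G x)"
  define N where "N = real b ^ (2 * Suc k + 1)"
  define r where "r = C * Bd powr \<beta> * (\<theta> powr \<beta>) ^ Suc k"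
  let ?C = "branch_choices b (Suc k)"
  let ?new = "\<lambda>c. piK p (Suc k) (zeta_x \<zeta> (Suc k) c u)" and ?old = "\<lambda>c. piK p k (zeta_x \<zeta> k c u)"
  have N: "0 < N" using b_pos by (simp add: N_def)
  have diff: "Pk b \<zeta> f0 p (Suc k) G u - Pk b \<zeta> f0 p k G u = (1 / N) *\<^sub>R (\<Sum>c\<in>?C. H (?new c) - H (?old c))"
    unfolding Pk_as_order_Suc_average[where k = k]
    by (simp add: Pk_def H_def N_def sum_subtractf scaleR_diff_right)
  have increment: "norm (H (?new c) - H (?old c)) \<le> r" if c: "c \<in> ?C" for c
  proof -
    have in_Omega: "?new c \<in> Omega" "?old c \<in> Omega"
      using zeta_x_in_Omega[OF u c] piK_in_Omega by auto
    have "norm (H (piK p (Suc k) (?new c)) - H (piK p (Suc k) (?old c))) \<le> C * d (?new c) (?old c) powr \<beta>"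
      using hoelderD[OF H in_Omega] unfolding H_def .
    also have "\<dots> \<le> C * (\<theta> ^ Suc k * Bd) powr \<beta>"
      using d_branch_order_step[OF u c] d_nonneg[OF in_Omega] beta C by (intro mult_left_mono powr_mono2) auto
    also have "\<dots> = r"
      using theta diam_nonneg by (simp add: r_def powr_mult power_powr_real mult_ac)
    finally show ?thesis by (simp add: piK_piK)
  qed
  have "norm (\<Sum>c\<in>?C. H (?new c) - H (?old c)) \<le> N * r"
    using sum_norm_le[of ?C _ "\<lambda>_. r", OF increment] b_pos by (simp add: branch_choices_card N_def)
  then show ?thesis unfolding diff r_def[symmetric] using N by (simp add: field_simps)
qed

lemma Pk_convergent:
  fixes G :: "(int \<Rightarrow> real) \<Rightarrow> 'a::banach"
  assumes H: "hoelder (\<lambda>x. exp (f0 x) *\<^sub>R G x) C" and C: "0 \<le> C" and u: "u \<in> Omega"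
  shows "(\<lambda>k. Pk b \<zeta> f0 p k G u) \<longlonglongrightarrow> Pop b \<zeta> f0 p G u"
proof -
  have "summable (\<lambda>k. C * Bd powr \<beta> * (\<theta> powr \<beta>) ^ Suc k)"
    using theta beta by (intro summable_mult summable_mult2 summable_geometric) (auto simp: powr01_less_one)
  with Pk_increment_bound[OF H C u] have "convergent (\<lambda>k. Pk b \<zeta> f0 p k G u)"
    by (rule convergent_if_increments_summable)
  then show ?thesis unfolding Pop_def by (simp add: convergent_LIMSEQ_iff)
qed

end

subsection \<open>The normalised operator L\<close>

text \<open>The potential f0 \<in> C, the positive eigenfunction h \<in> C with P h = lam h, and the
  a priori regularity of h stated in the paper.\<close>
locale normalised_operator = branch_system +
  fixes f0 h :: "(int \<Rightarrow> real) \<Rightarrow> real" and lam :: real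
  assumes f0C: "inC \<theta> dI p \<beta> f0"
    and hC: "inC \<theta> dI p \<beta> h"
    and h_pos: "\<forall>x\<in>Omega. 0 < h x"
    and h_eig: "\<forall>x\<in>Omega. Pop b \<zeta> f0 p h x = lam * h x"
    and h_reg: "\<forall>x\<in>Omega. \<forall>y\<in>Omega. h x \<le>
        exp (hol_semi \<theta> dI p \<beta> f0 * (\<eta> powr \<beta> / (1 - \<eta> powr \<beta>)) * dOm \<theta> dI x y powr \<beta>) * h y"
begin

definition f0_sup :: real where "f0_sup = sup_norm f0"
definition f0_hol :: real where "f0_hol = hol_semi \<theta> dI p \<beta> f0"
definition h_sup :: real where "h_sup = sup_norm h"
definition h_hol :: real where "h_hol = hol_semi \<theta> dI p \<beta> h"

definition h_log_hol :: real where
  "h_log_hol = \<bar>hol_semi \<theta> dI p \<beta> f0 * (\<eta> powr \<beta> / (1 - \<eta> powr \<beta>))\<bar>"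

definition h_min :: real where "h_min = h (\<lambda>_. p) / exp (h_log_hol * Bd powr \<beta>)"
definition h_lip :: real where "h_lip = h_log_hol * exp (h_log_hol * Bd powr \<beta>) * h_sup"

definition weight :: "(int \<Rightarrow> real) \<Rightarrow> real" where "weight x = exp (f0 x) * h x"
definition weight_sup :: real where "weight_sup = exp f0_sup * h_sup"
definition weight_hol :: real where "weight_hol = exp f0_sup * h_hol + h_sup * (exp f0_sup * f0_hol)"

lemma f0_bound: "x \<in> Omega \<Longrightarrow> \<bar>f0 x\<bar> \<le> f0_sup"
  using inC_sup_bound[OF f0C] by (simp add: f0_sup_def)

lemma h_bound: "x \<in> Omega \<Longrightarrow> h x \<le> h_sup"
  using inC_sup_bound[OF hC, of x] by (simp add: h_sup_def)

lemma constants_nonneg: "0 \<le> f0_hol" "0 \<le> h_hol" "0 \<le> h_log_hol" "0 \<le> h_sup"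
  "0 \<le> weight_sup" "0 \<le> weight_hol" "0 \<le> h_lip"
proof -
  show hol: "0 \<le> f0_hol" "0 \<le> h_hol"
    using hol_semi_nonneg f0C hC by (auto simp: f0_hol_def h_hol_def)
  show "0 \<le> h_log_hol" by (simp add: h_log_hol_def)
  show sup: "0 \<le> h_sup" using h_bound[OF const_p_in_Omega] h_pos const_p_in_Omega by force
  then show "0 \<le> weight_sup" "0 \<le> weight_hol" "0 \<le> h_lip"
    using hol by (simp_all add: weight_sup_def weight_hol_def h_lip_def h_log_hol_def)
qed

lemma h_ratio: "x \<in> Omega \<Longrightarrow> y \<in> Omega \<Longrightarrow> h x \<le> exp (h_log_hol * d x y powr \<beta>) * h y"
proof -
  assume xy: "x \<in> Omega" "y \<in> Omega"
  have "hol_semi \<theta> dI p \<beta> f0 * (\<eta> powr \<beta> / (1 - \<eta> powr \<beta>)) * d x y powr \<beta> \<le> h_log_hol * d x y powr \<beta>"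
    unfolding h_log_hol_def by (intro mult_right_mono) (auto simp del: abs_mult abs_divide)
  then have "exp (hol_semi \<theta> dI p \<beta> f0 * (\<eta> powr \<beta> / (1 - \<eta> powr \<beta>)) * d x y powr \<beta>) * h y
      \<le> exp (h_log_hol * d x y powr \<beta>) * h y"
    using h_pos xy by (intro mult_right_mono) auto
  then show ?thesis using h_reg xy by (meson order_trans)
qed

lemma h_min_pos: "0 < h_min"
  using h_pos const_p_in_Omega by (simp add: h_min_def)

lemma h_min_le: "x \<in> Omega \<Longrightarrow> h_min \<le> h x"
proof -
  assume x: "x \<in> Omega"
  have "h (\<lambda>_. p) \<le> exp (h_log_hol * d (\<lambda>_. p) x powr \<beta>) * h x"
    using h_ratio const_p_in_Omega x by simp
  also have "\<dots> \<le> exp (h_log_hol * Bd powr \<beta>) * h x"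
    using d_powr_le_diam[OF const_p_in_Omega x] h_pos x constants_nonneg
    by (intro mult_right_mono) (auto intro: mult_left_mono)
  finally show ?thesis by (simp add: h_min_def divide_le_eq mult.commute)
qed

text \<open>h is globally beta-Hoelder: h x - h y \<le> (e^t - 1) h y with t = c d(x,y)^beta.\<close>
lemma h_lipschitz: "x \<in> Omega \<Longrightarrow> y \<in> Omega \<Longrightarrow> \<bar>h x - h y\<bar> \<le> h_lip * d x y powr \<beta>"
proof -
  have one_sided: "h x - h y \<le> h_lip * d x y powr \<beta>" if xy: "x \<in> Omega" "y \<in> Omega" for x y
  proof -
    let ?t = "h_log_hol * d x y powr \<beta>"
    have t: "0 \<le> ?t" "?t \<le> h_log_hol * Bd powr \<beta>"
      using constants_nonneg d_powr_le_diam[OF xy] by (auto intro: mult_left_mono)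
    have "h x - h y \<le> (exp ?t - 1) * h y" using h_ratio[OF xy] by (simp add: algebra_simps)
    also have "\<dots> \<le> (?t * exp ?t) * h y"
      using exp_diff_le[of 0 ?t] t h_pos xy by (intro mult_right_mono) (auto simp: mult.commute)
    also have "\<dots> \<le> (?t * exp (h_log_hol * Bd powr \<beta>)) * h_sup"
      using t h_pos h_bound xy constants_nonneg by (intro mult_mono) (auto intro: less_imp_le)
    also have "\<dots> = h_lip * d x y powr \<beta>" by (simp add: h_lip_def mult_ac)
    finally show ?thesis .
  qed
  assume xy: "x \<in> Omega" "y \<in> Omega"
  show ?thesis using one_sided[OF xy] one_sided[OF xy(2,1)] d_sym[OF xy] by (simp add: abs_le_iff)
qed

lemma weight_hoelder: "hoelder weight weight_hol"
proof -
  have "hoelder (\<lambda>x. exp (f0 x)) (exp f0_sup * f0_hol)"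
    using hoelder_exp[OF inC_hoelder[OF f0C]] f0_bound by (simp add: f0_hol_def)
  moreover have "\<forall>x\<in>Omega. norm (exp (f0 x)) \<le> exp f0_sup" using f0_bound by (fastforce simp: abs_le_iff)
  moreover have "hoelder h h_hol" using inC_hoelder[OF hC] by (simp add: h_hol_def)
  moreover have "\<forall>x\<in>Omega. norm (h x) \<le> h_sup" using h_bound h_pos by (simp add: less_imp_le)
  ultimately have "hoelder (\<lambda>x. exp (f0 x) * h x) (exp f0_sup * h_hol + h_sup * (exp f0_sup * f0_hol))"
    by (rule hoelder_mult)
  then show ?thesis unfolding weight_def[abs_def] weight_hol_def .
qed

lemma weight_bounds: "x \<in> Omega \<Longrightarrow> exp (- f0_sup) * h_min \<le> weight x \<and> weight x \<le> weight_sup"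
proof -
  assume x: "x \<in> Omega"
  have "exp (- f0_sup) \<le> exp (f0 x)" "exp (f0 x) \<le> exp f0_sup" using f0_bound[OF x] by auto
  moreover have "h_min \<le> h x" "h x \<le> h_sup" using h_min_le h_bound x by auto
  ultimately show ?thesis
    using h_min_pos unfolding weight_def weight_sup_def by (auto intro!: mult_mono)
qed

lemma weight_nonneg: "x \<in> Omega \<Longrightarrow> 0 \<le> weight x"
  using h_pos by (simp add: weight_def less_imp_le)

lemma Pk_weighted:
  "Pk b \<zeta> f0 p k (\<lambda>y. h y *\<^sub>R G y) u = (1 / real b ^ (2 * k + 1)) *\<^sub>R
     (\<Sum>c\<in>branch_choices b k. weight (piK p k (zeta_x \<zeta> k c u)) *\<^sub>R G (piK p k (zeta_x \<zeta> k c u)))"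
  by (simp add: Pk_def weight_def)

lemma Pk_h_average:
  "Pk b \<zeta> f0 p k h u = (\<Sum>c\<in>branch_choices b k. weight (piK p k (zeta_x \<zeta> k c u))) / real b ^ (2 * k + 1)"
  by (simp add: Pk_def weight_def)

lemma Pk_h_tendsto: "u \<in> Omega \<Longrightarrow> (\<lambda>k. Pk b \<zeta> f0 p k h u) \<longlonglongrightarrow> lam * h u"
proof -
  assume u: "u \<in> Omega"
  have "hoelder (\<lambda>x. exp (f0 x) *\<^sub>R h x) weight_hol"
    using weight_hoelder by (simp add: weight_def[abs_def])
  then have "(\<lambda>k. Pk b \<zeta> f0 p k h u) \<longlonglongrightarrow> Pop b \<zeta> f0 p h u"
    by (rule Pk_convergent) (use constants_nonneg u in auto)
  then show ?thesis using h_eig u by simp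
qed

lemma Pk_h_lower: "u \<in> Omega \<Longrightarrow> exp (- f0_sup) * h_min \<le> Pk b \<zeta> f0 p k h u"
proof -
  assume u: "u \<in> Omega"
  define N where "N = real b ^ (2 * k + 1)"
  have N: "0 < N" "real (card (branch_choices b k)) = N" using b_pos by (auto simp: N_def branch_choices_card)
  have "N * (exp (- f0_sup) * h_min) \<le> (\<Sum>c\<in>branch_choices b k. weight (piK p k (zeta_x \<zeta> k c u)))"
    using sum_mono[of "branch_choices b k" "\<lambda>_. exp (- f0_sup) * h_min"] N
      weight_bounds zeta_x_in_Omega[OF u _ order_refl] piK_in_Omega by simp
  moreover have "Pk b \<zeta> f0 p k h u = (\<Sum>c\<in>branch_choices b k. weight (piK p k (zeta_x \<zeta> k c u))) / N"
    unfolding Pk_h_average N_def ..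
  ultimately show ?thesis using N by (simp add: pos_le_divide_eq mult.commute)
qed

lemma lam_pos: "0 < lam"
proof -
  have "exp (- f0_sup) * h_min \<le> lam * h (\<lambda>_. p)"
    using Pk_h_tendsto[OF const_p_in_Omega] Pk_h_lower[OF const_p_in_Omega]
    by (intro tendsto_lowerbound) auto
  then have "0 < lam * h (\<lambda>_. p)" using h_min_pos by (meson exp_gt_zero mult_pos_pos order_less_le_trans)
  moreover have "0 < h (\<lambda>_. p)" using h_pos const_p_in_Omega by blast
  ultimately show ?thesis by (simp add: zero_less_mult_iff)
qed

definition ly_const :: real where
  "ly_const = weight_hol / (lam * h_min) + weight_sup * h_lip / (lam * h_min^2)"

lemma ly_const_nonneg: "0 \<le> ly_const"
  using constants_nonneg lam_pos h_min_pos by (simp add: ly_const_def)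

end

subsection \<open>Lasota-Yorke estimates for L\<close>

context normalised_operator
begin

lemma weight_norm_bound: "\<forall>x\<in>Omega. norm (complex_of_real (weight x)) \<le> weight_sup"
  using weight_bounds weight_nonneg by simp

lemma Pk_weighted_tendsto:
  fixes \<Phi> :: "(int \<Rightarrow> real) \<Rightarrow> complex"
  assumes M: "\<forall>x\<in>Omega. norm (\<Phi> x) \<le> M" and S: "hoelder \<Phi> S" "0 \<le> S" and u: "u \<in> Omega"
  shows "(\<lambda>k. Pk b \<zeta> f0 p k (\<lambda>y. h y *\<^sub>R \<Phi> y) u) \<longlonglongrightarrow> Pop b \<zeta> f0 p (\<lambda>y. h y *\<^sub>R \<Phi> y) u"
proof (rule Pk_convergent)
  have M0: "0 \<le> M" using M const_p_in_Omega by (meson norm_ge_zero order_trans)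
  have "hoelder (\<lambda>x. complex_of_real (weight x) * \<Phi> x) (weight_sup * S + M * weight_hol)"
    by (rule hoelder_mult[OF hoelder_of_real[OF weight_hoelder] weight_norm_bound S(1) M])
  then show "hoelder (\<lambda>x. exp (f0 x) *\<^sub>R (h x *\<^sub>R \<Phi> x)) (weight_sup * S + M * weight_hol)"
    by (simp add: weight_def scaleR_conv_of_real mult.assoc)
  show "0 \<le> weight_sup * S + M * weight_hol" using constants_nonneg S M0 by simp
qed (rule u)

text \<open>L is a contraction for the sup norm: |P(h Phi)| \<le> |Phi|_oo P h = |Phi|_oo lam h.\<close>
lemma L_sup_bound:
  fixes \<Phi> :: "(int \<Rightarrow> real) \<Rightarrow> complex"
  assumes M: "\<forall>x\<in>Omega. norm (\<Phi> x) \<le> M" and S: "hoelder \<Phi> S" "0 \<le> S" and u: "u \<in> Omega"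
  shows "norm (Lop b \<zeta> f0 p h lam \<Phi> u) \<le> M"
proof -
  let ?F = "\<lambda>y. h y *\<^sub>R \<Phi> y"
  have approx: "norm (Pk b \<zeta> f0 p k ?F u) \<le> M * Pk b \<zeta> f0 p k h u" for k
  proof -
    let ?a = "\<lambda>c. piK p k (zeta_x \<zeta> k c u)"
    have "norm (\<Sum>c\<in>branch_choices b k. weight (?a c) *\<^sub>R \<Phi> (?a c)) \<le> (\<Sum>c\<in>branch_choices b k. M * weight (?a c))"
    proof (rule sum_norm_le)
      fix c assume "c \<in> branch_choices b k"
      then have a: "?a c \<in> Omega" using zeta_x_in_Omega[OF u _ order_refl] piK_in_Omega by simp
      have "norm (\<Phi> (?a c)) \<le> M" using M a by blast
      then show "norm (weight (?a c) *\<^sub>R \<Phi> (?a c)) \<le> M * weight (?a c)"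
        using mult_right_mono[OF _ weight_nonneg[OF a]] weight_nonneg[OF a] by (simp add: mult.commute)
    qed
    then show ?thesis using b_pos unfolding Pk_weighted Pk_h_average
      by (simp add: sum_distrib_left[symmetric] divide_right_mono)
  qed
  have "norm (Pop b \<zeta> f0 p ?F u) \<le> M * (lam * h u)"
    by (rule tendsto_le[OF trivial_limit_sequentially
          tendsto_mult[OF tendsto_const Pk_h_tendsto[OF u]]
          tendsto_norm[OF Pk_weighted_tendsto[OF M S u]]])
       (use approx in auto)
  moreover have "0 < lam * h u" using lam_pos h_pos u by simp
  ultimately show ?thesis unfolding Lop_def by (simp add: divide_le_eq mult.commute)
qed

lemma normalised_branch_term_bound:
  fixes \<Phi> :: "(int \<Rightarrow> real) \<Rightarrow> complex"
  assumes M: "\<forall>x\<in>Omega. norm (\<Phi> x) \<le> M" and S: "hoelder \<Phi> S" "0 \<le> S"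
    and u: "u \<in> Omega" and v: "v \<in> Omega" and c: "c \<in> branch_choices b k"
  defines "a \<equiv> piK p k (zeta_x \<zeta> k c u)" and "a' \<equiv> piK p k (zeta_x \<zeta> k c v)"
    and "D \<equiv> d u v powr \<beta>"
  shows "norm ((weight a / (lam * h u)) *\<^sub>R \<Phi> a - (weight a' / (lam * h v)) *\<^sub>R \<Phi> a')
     \<le> (weight a / (lam * h u)) * (S * (\<eta> powr \<beta> * D)) + ly_const * D * M"
proof -
  have in_Omega: "a \<in> Omega" "a' \<in> Omega"
    using zeta_x_in_Omega[OF u c order_refl] zeta_x_in_Omega[OF v c order_refl] piK_in_Omega
    by (auto simp: a_def a'_def)
  have D0: "0 \<le> D" by (simp add: D_def)
  have h_lower: "h_min \<le> h u" "h_min \<le> h v" using h_min_le u v by auto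
  have contracted: "d a a' powr \<beta> \<le> \<eta> powr \<beta> * D"
  proof -
    have "d a a' powr \<beta> \<le> (\<eta> * d u v) powr \<beta>"
      using d_branch_contract[OF u v c] d_nonneg[OF in_Omega] beta by (intro powr_mono2) (auto simp: a_def a'_def)
    then show ?thesis using eta d_nonneg[OF u v] by (simp add: powr_mult D_def)
  qed
  then have not_expanded: "d a a' powr \<beta> \<le> D"
    using mult_right_mono[OF powr_le1[of \<beta> \<eta>] D0] eta beta by simp
  have truncated: "piK p k a = a" "piK p k a' = a'" by (simp_all add: a_def a'_def piK_piK)
  have \<Phi>_var: "norm (\<Phi> a - \<Phi> a') \<le> S * (\<eta> powr \<beta> * D)"
    using hoelderD[OF S(1) in_Omega, of k] mult_left_mono[OF contracted S(2)] truncated by simp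
  have weight_var: "\<bar>weight a - weight a'\<bar> \<le> weight_hol * D"
    using hoelderD[OF weight_hoelder in_Omega, of k] mult_left_mono[OF not_expanded, of weight_hol]
      constants_nonneg truncated by simp
  have coef: "\<bar>weight a / (lam * h u) - weight a' / (lam * h v)\<bar> \<le> ly_const * D"
    unfolding ly_const_def
    by (rule quotient_diff_bound[OF lam_pos h_min_pos h_lower weight_nonneg[OF in_Omega(2)]
          weight_bounds[OF in_Omega(2), THEN conjunct2] weight_var h_lipschitz[OF u v, folded D_def] D0])
  have nonneg: "0 \<le> weight a / (lam * h u)"
    using weight_nonneg[OF in_Omega(1)] lam_pos h_pos[rule_format, OF u] by simp
  have split: "(weight a / (lam * h u)) *\<^sub>R \<Phi> a - (weight a' / (lam * h v)) *\<^sub>R \<Phi> a'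
      = (weight a / (lam * h u)) *\<^sub>R (\<Phi> a - \<Phi> a') + (weight a / (lam * h u) - weight a' / (lam * h v)) *\<^sub>R \<Phi> a'"
    by (simp add: algebra_simps)
  have "norm ((weight a / (lam * h u)) *\<^sub>R (\<Phi> a - \<Phi> a') + (weight a / (lam * h u) - weight a' / (lam * h v)) *\<^sub>R \<Phi> a')
      \<le> norm ((weight a / (lam * h u)) *\<^sub>R (\<Phi> a - \<Phi> a'))
      + norm ((weight a / (lam * h u) - weight a' / (lam * h v)) *\<^sub>R \<Phi> a')"
    by (rule norm_triangle_ineq)
  also have "\<dots> = (weight a / (lam * h u)) * norm (\<Phi> a - \<Phi> a')
      + \<bar>weight a / (lam * h u) - weight a' / (lam * h v)\<bar> * norm (\<Phi> a')"
    by (simp only: norm_scaleR abs_of_nonneg[OF nonneg])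
  also have "\<dots> \<le> (weight a / (lam * h u)) * (S * (\<eta> powr \<beta> * D)) + ly_const * D * M"
  proof (rule add_mono)
    show "(weight a / (lam * h u)) * norm (\<Phi> a - \<Phi> a') \<le> (weight a / (lam * h u)) * (S * (\<eta> powr \<beta> * D))"
      by (rule mult_left_mono[OF \<Phi>_var nonneg])
    have "norm (\<Phi> a') \<le> M" using M in_Omega(2) by blast
    then show "\<bar>weight a / (lam * h u) - weight a' / (lam * h v)\<bar> * norm (\<Phi> a') \<le> ly_const * D * M"
      by (rule mult_mono[OF coef]) (use ly_const_nonneg D0 in auto)
  qed
  finally show ?thesis unfolding split .
qed

lemma Pk_hoelder_bound:
  fixes \<Phi> :: "(int \<Rightarrow> real) \<Rightarrow> complex"
  assumes M: "\<forall>x\<in>Omega. norm (\<Phi> x) \<le> M" and S: "hoelder \<Phi> S" "0 \<le> S"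
    and u: "u \<in> Omega" and v: "v \<in> Omega"
  shows "norm ((1/(lam*h u)) *\<^sub>R Pk b \<zeta> f0 p k (\<lambda>y. h y *\<^sub>R \<Phi> y) u - (1/(lam*h v)) *\<^sub>R Pk b \<zeta> f0 p k (\<lambda>y. h y *\<^sub>R \<Phi> y) v)
     \<le> (Pk b \<zeta> f0 p k h u / (lam*h u)) * (S * (\<eta> powr \<beta> * d u v powr \<beta>)) + ly_const * d u v powr \<beta> * M"
proof -
  define N where "N = real b ^ (2 * k + 1)"
  let ?C = "branch_choices b k"
  let ?a = "\<lambda>c. piK p k (zeta_x \<zeta> k c u)" and ?a' = "\<lambda>c. piK p k (zeta_x \<zeta> k c v)"
  let ?T = "\<lambda>c. (weight (?a c) / (lam * h u)) *\<^sub>R \<Phi> (?a c) - (weight (?a' c) / (lam * h v)) *\<^sub>R \<Phi> (?a' c)"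
  let ?B = "\<lambda>c. (weight (?a c) / (lam * h u)) * (S * (\<eta> powr \<beta> * d u v powr \<beta>)) + ly_const * d u v powr \<beta> * M"
  have N: "0 < N" "real (card ?C) = N" using b_pos by (auto simp: N_def branch_choices_card)
  have hu: "0 < lam * h u" using lam_pos h_pos u by simp
  have lhs: "(1/(lam*h u)) *\<^sub>R Pk b \<zeta> f0 p k (\<lambda>y. h y *\<^sub>R \<Phi> y) u - (1/(lam*h v)) *\<^sub>R Pk b \<zeta> f0 p k (\<lambda>y. h y *\<^sub>R \<Phi> y) v
      = (1/N) *\<^sub>R (\<Sum>c\<in>?C. ?T c)"
    unfolding Pk_weighted N_def[symmetric]
    by (simp add: scaleR_sum_right sum_subtractf scaleR_diff_right mult_ac)
  have "norm (\<Sum>c\<in>?C. ?T c) \<le> (\<Sum>c\<in>?C. ?B c)"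
    by (rule sum_norm_le) (rule normalised_branch_term_bound[OF M S u v])
  also have "\<dots> = (\<Sum>c\<in>?C. weight (?a c)) / (lam * h u) * (S * (\<eta> powr \<beta> * d u v powr \<beta>)) + N * (ly_const * d u v powr \<beta> * M)"
    using N by (simp add: sum.distrib sum_divide_distrib[symmetric] sum_distrib_right[symmetric])
  finally have "norm ((1/N) *\<^sub>R (\<Sum>c\<in>?C. ?T c))
      \<le> (1/N) * ((\<Sum>c\<in>?C. weight (?a c)) / (lam * h u) * (S * (\<eta> powr \<beta> * d u v powr \<beta>)) + N * (ly_const * d u v powr \<beta> * M))"
    using N by (simp add: divide_right_mono)
  also have "\<dots> = (Pk b \<zeta> f0 p k h u / (lam*h u)) * (S * (\<eta> powr \<beta> * d u v powr \<beta>)) + ly_const * d u v powr \<beta> * M"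
    unfolding Pk_h_average N_def[symmetric] using N hu by (simp add: field_simps)
  finally show ?thesis unfolding lhs .
qed

lemma L_hoelder_bound:
  fixes \<Phi> :: "(int \<Rightarrow> real) \<Rightarrow> complex"
  assumes M: "\<forall>x\<in>Omega. norm (\<Phi> x) \<le> M" and S: "hoelder \<Phi> S" "0 \<le> S"
    and u: "u \<in> Omega" and v: "v \<in> Omega"
  shows "norm (Lop b \<zeta> f0 p h lam \<Phi> u - Lop b \<zeta> f0 p h lam \<Phi> v) \<le> (\<eta> powr \<beta> * S + ly_const * M) * d u v powr \<beta>"
proof -
  let ?F = "\<lambda>y. h y *\<^sub>R \<Phi> y"
  have hu: "0 < lam * h u" using lam_pos h_pos u by simp
  have lim_lhs: "(\<lambda>k. norm ((1/(lam*h u)) *\<^sub>R Pk b \<zeta> f0 p k ?F u - (1/(lam*h v)) *\<^sub>R Pk b \<zeta> f0 p k ?F v))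
      \<longlonglongrightarrow> norm (Lop b \<zeta> f0 p h lam \<Phi> u - Lop b \<zeta> f0 p h lam \<Phi> v)"
    unfolding Lop_def
    by (intro tendsto_norm tendsto_diff tendsto_scaleR tendsto_const Pk_weighted_tendsto[OF M S u] Pk_weighted_tendsto[OF M S v])
  have lim_rhs: "(\<lambda>k. (Pk b \<zeta> f0 p k h u / (lam*h u)) * (S * (\<eta> powr \<beta> * d u v powr \<beta>)) + ly_const * d u v powr \<beta> * M)
      \<longlonglongrightarrow> ((lam * h u) / (lam*h u)) * (S * (\<eta> powr \<beta> * d u v powr \<beta>)) + ly_const * d u v powr \<beta> * M"
    by (intro tendsto_add tendsto_mult tendsto_divide tendsto_const Pk_h_tendsto[OF u]) (use hu in auto)
  have "norm (Lop b \<zeta> f0 p h lam \<Phi> u - Lop b \<zeta> f0 p h lam \<Phi> v)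
      \<le> ((lam * h u) / (lam*h u)) * (S * (\<eta> powr \<beta> * d u v powr \<beta>)) + ly_const * d u v powr \<beta> * M"
    by (rule tendsto_le[OF trivial_limit_sequentially lim_rhs lim_lhs])
       (intro always_eventually allI Pk_hoelder_bound[OF M S u v])
  also have "\<dots> = (\<eta> powr \<beta> * S + ly_const * M) * d u v powr \<beta>"
    using lam_pos h_pos[rule_format, OF u] by (simp add: algebra_simps)
  finally show ?thesis .
qed

end

subsection \<open>The twisted coupled operator\<close>

context normalised_operator
begin

lemma Lft_as_L:
  "Lft b \<zeta> f0 p h lam Einv f t \<Phi> = (\<lambda>x. Lop b \<zeta> f0 p h lam (\<lambda>y. iexp (t * f y) * \<Phi> y) (Einv x))"
  by (simp add: Lft_def calL_def fun_eq_iff)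

lemma twisted_step:
  fixes \<Phi> :: "(int \<Rightarrow> real) \<Rightarrow> complex" and Einv :: "(int \<Rightarrow> real) \<Rightarrow> (int \<Rightarrow> real)"
  assumes Einv_Omega: "\<forall>x\<in>Omega. Einv x \<in> Omega"
    and Einv_lip: "\<forall>x\<in>Omega. \<forall>y\<in>Omega. d (Einv x) (Einv y) \<le> CE * d x y" and CE: "0 < CE"
    and fC: "inC \<theta> dI p \<beta> f"
    and \<Phi>C: "inC \<theta> dI p \<beta> \<Phi>" and M: "sup_norm \<Phi> \<le> M" and S: "hol_semi \<theta> dI p \<beta> \<Phi> \<le> S"
  shows "inC \<theta> dI p \<beta> (Lft b \<zeta> f0 p h lam Einv f t \<Phi>)"
    "sup_norm (Lft b \<zeta> f0 p h lam Einv f t \<Phi>) \<le> M"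
    "hol_semi \<theta> dI p \<beta> (Lft b \<zeta> f0 p h lam Einv f t \<Phi>)
       \<le> CE powr \<beta> * (\<eta> powr \<beta> * (S + M * (\<bar>t\<bar> * hol_semi \<theta> dI p \<beta> f)) + ly_const * M)"
proof -
  define \<Phi>t where "\<Phi>t = (\<lambda>y. iexp (t * f y) * \<Phi> y)"
  define S' where "S' = S + M * (\<bar>t\<bar> * hol_semi \<theta> dI p \<beta> f)"
  define S'' where "S'' = CE powr \<beta> * (\<eta> powr \<beta> * S' + ly_const * M)"
  have M_bound: "\<forall>x\<in>Omega. norm (\<Phi> x) \<le> M" using inC_sup_bound[OF \<Phi>C] M by (meson order_trans)
  have M0: "0 \<le> M" using M_bound const_p_in_Omega by (meson norm_ge_zero order_trans)
  have S'0: "0 \<le> S'"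
    using hol_semi_nonneg[OF \<Phi>C] S M0 hol_semi_nonneg[OF fC] by (simp add: S'_def)
  have S''0: "0 \<le> S''" using S'0 ly_const_nonneg M0 by (simp add: S''_def)
  have \<Phi>t_sup: "\<forall>x\<in>Omega. norm (\<Phi>t x) \<le> M"
    using M_bound by (simp add: \<Phi>t_def norm_mult)
  have "hoelder \<Phi>t (1 * S + M * (\<bar>t\<bar> * hol_semi \<theta> dI p \<beta> f))"
    unfolding \<Phi>t_def
    by (rule hoelder_mult[OF hoelder_iexp[OF inC_hoelder[OF fC]] _ hoelder_mono[OF inC_hoelder[OF \<Phi>C] S] M_bound])
       simp
  then have \<Phi>t_hoelder: "hoelder \<Phi>t S'" by (simp add: S'_def)
  have hoelder_bound: "\<forall>u\<in>Omega. \<forall>v\<in>Omega.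
      norm (Lft b \<zeta> f0 p h lam Einv f t \<Phi> u - Lft b \<zeta> f0 p h lam Einv f t \<Phi> v) \<le> S'' * d u v powr \<beta>"
  proof (intro ballI)
    fix u v assume u: "u \<in> Omega" and v: "v \<in> Omega"
    have Eu: "Einv u \<in> Omega" "Einv v \<in> Omega" using Einv_Omega u v by auto
    have "norm (Lop b \<zeta> f0 p h lam \<Phi>t (Einv u) - Lop b \<zeta> f0 p h lam \<Phi>t (Einv v))
       \<le> (\<eta> powr \<beta> * S' + ly_const * M) * d (Einv u) (Einv v) powr \<beta>"
      by (rule L_hoelder_bound[OF \<Phi>t_sup \<Phi>t_hoelder S'0 Eu])
    also have "\<dots> \<le> (\<eta> powr \<beta> * S' + ly_const * M) * (CE * d u v) powr \<beta>"
      using Einv_lip u v d_nonneg[OF Eu] S'0 ly_const_nonneg M0 beta by (intro mult_left_mono powr_mono2) auto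
    also have "\<dots> = S'' * d u v powr \<beta>"
      using CE d_nonneg[OF u v] by (simp add: S''_def powr_mult mult_ac)
    finally show "norm (Lft b \<zeta> f0 p h lam Einv f t \<Phi> u - Lft b \<zeta> f0 p h lam Einv f t \<Phi> v) \<le> S'' * d u v powr \<beta>"
      unfolding Lft_as_L \<Phi>t_def .
  qed
  have sup_bound: "\<forall>x\<in>Omega. norm (Lft b \<zeta> f0 p h lam Einv f t \<Phi> x) \<le> M"
    unfolding Lft_as_L using L_sup_bound[OF \<Phi>t_sup \<Phi>t_hoelder S'0] Einv_Omega by (simp add: \<Phi>t_def)
  note result = global_hoelder_inC[OF hoelder_bound S''0 sup_bound]
  show "inC \<theta> dI p \<beta> (Lft b \<zeta> f0 p h lam Einv f t \<Phi>)" by (rule result(1))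
  show "sup_norm (Lft b \<zeta> f0 p h lam Einv f t \<Phi>) \<le> M" by (rule result(3))
  show "hol_semi \<theta> dI p \<beta> (Lft b \<zeta> f0 p h lam Einv f t \<Phi>)
       \<le> CE powr \<beta> * (\<eta> powr \<beta> * (S + M * (\<bar>t\<bar> * hol_semi \<theta> dI p \<beta> f)) + ly_const * M)"
    using result(2) by (simp add: S''_def S'_def)
qed

lemma twisted_iterates_bound:
  fixes \<Phi> :: "(int \<Rightarrow> real) \<Rightarrow> complex" and Einv :: "(int \<Rightarrow> real) \<Rightarrow> (int \<Rightarrow> real)"
  assumes Einv_Omega: "\<forall>x\<in>Omega. Einv x \<in> Omega"
    and Einv_lip: "\<forall>x\<in>Omega. \<forall>y\<in>Omega. d (Einv x) (Einv y) \<le> CE * d x y"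
    and CE: "0 < CE" "CE * \<eta> < 1"
    and fC: "inC \<theta> dI p \<beta> f" and \<Phi>C: "inC \<theta> dI p \<beta> \<Phi>" and t: "\<bar>t\<bar> < 1"
  defines "rho \<equiv> (CE * \<eta>) powr \<beta>"
    and "A \<equiv> CE powr \<beta> * (\<eta> powr \<beta> * hol_semi \<theta> dI p \<beta> f + ly_const)"
  shows "inC \<theta> dI p \<beta> ((Lft b \<zeta> f0 p h lam Einv f t ^^ n) \<Phi>) \<and>
         sup_norm ((Lft b \<zeta> f0 p h lam Einv f t ^^ n) \<Phi>) \<le> sup_norm \<Phi> \<and>
         hol_semi \<theta> dI p \<beta> ((Lft b \<zeta> f0 p h lam Einv f t ^^ n) \<Phi>)
           \<le> hol_semi \<theta> dI p \<beta> \<Phi> + A * sup_norm \<Phi> / (1 - rho)"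
proof -
  let ?M = "sup_norm \<Phi>" and ?T = "hol_semi \<theta> dI p \<beta> \<Phi> + A * sup_norm \<Phi> / (1 - rho)"
  have M0: "0 \<le> ?M" using inC_sup_bound[OF \<Phi>C const_p_in_Omega] by (meson norm_ge_zero order_trans)
  have rho_lt_1: "rho < 1"
    unfolding rho_def using CE eta beta by (simp add: powr01_less_one)
  then have rho: "0 \<le> rho" "rho < 1" "rho = CE powr \<beta> * \<eta> powr \<beta>"
    unfolding rho_def using CE eta by (simp_all add: powr_mult)
  have A0: "0 \<le> A" using hol_semi_nonneg[OF fC] ly_const_nonneg by (simp add: A_def)
  show ?thesis
  proof (induction n)
    case 0
    show ?case using \<Phi>C A0 M0 rho by simp
  next
    case (Suc n)
    let ?P = "(Lft b \<zeta> f0 p h lam Einv f t ^^ n) \<Phi>"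
    have "?M * (\<bar>t\<bar> * hol_semi \<theta> dI p \<beta> f) \<le> ?M * hol_semi \<theta> dI p \<beta> f"
      using t M0 hol_semi_nonneg[OF fC] by (intro mult_left_mono) (auto intro: mult_left_le_one_le)
    then have "CE powr \<beta> * (\<eta> powr \<beta> * (?T + ?M * (\<bar>t\<bar> * hol_semi \<theta> dI p \<beta> f)) + ly_const * ?M)
        \<le> CE powr \<beta> * (\<eta> powr \<beta> * (?T + ?M * hol_semi \<theta> dI p \<beta> f) + ly_const * ?M)"
      by (intro mult_left_mono add_right_mono) auto
    also have "\<dots> = rho * ?T + A * ?M" by (simp add: rho(3) A_def algebra_simps)
    also have "\<dots> \<le> ?T"
      using contraction_invariant_bound[OF rho(1,2) hol_semi_nonneg[OF \<Phi>C]] by simp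
    finally show ?case
      using twisted_step[OF Einv_Omega Einv_lip CE(1) fC, of ?P ?M ?T t] Suc.IH by simp
  qed
qed

end

context normalised_operator
begin

lemma twisted_powers_bounded:
  fixes Einv :: "(int \<Rightarrow> real) \<Rightarrow> (int \<Rightarrow> real)"
  assumes Einv_Omega: "\<forall>x\<in>Omega. Einv x \<in> Omega"
    and Einv_lip: "\<forall>x\<in>Omega. \<forall>y\<in>Omega. d (Einv x) (Einv y) \<le> CE * d x y"
    and CE: "0 < CE" "CE * \<eta> < 1"
    and fC: "inC \<theta> dI p \<beta> f"
  shows "\<exists>C9>0. \<forall>t. \<bar>t\<bar> < 1 \<longrightarrow>
           (\<forall>n. \<forall>\<Phi> :: (int \<Rightarrow> real) \<Rightarrow> complex. inC \<theta> dI p \<beta> \<Phi> \<longrightarrow>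
              inC \<theta> dI p \<beta> ((Lft b \<zeta> f0 p h lam Einv f t ^^ n) \<Phi>) \<and>
              Cnorm \<theta> dI p \<beta> ((Lft b \<zeta> f0 p h lam Einv f t ^^ n) \<Phi>) \<le> C9 * Cnorm \<theta> dI p \<beta> \<Phi>)"
proof -
  define rho where "rho = (CE * \<eta>) powr \<beta>"
  define A where "A = CE powr \<beta> * (\<eta> powr \<beta> * hol_semi \<theta> dI p \<beta> f + ly_const)"
  have rho: "rho < 1" unfolding rho_def using CE eta beta by (simp add: powr01_less_one)
  have A0: "0 \<le> A" using hol_semi_nonneg[OF fC] ly_const_nonneg by (simp add: A_def)
  show ?thesis
  proof (intro exI[of _ "1 + A / (1 - rho)"] conjI allI impI)
    show "0 < 1 + A / (1 - rho)" using A0 rho by (simp add: add_pos_nonneg)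
    fix t :: real and n and \<Phi> :: "(int \<Rightarrow> real) \<Rightarrow> complex"
    assume t: "\<bar>t\<bar> < 1" and \<Phi>C: "inC \<theta> dI p \<beta> \<Phi>"
    note iterate = twisted_iterates_bound[OF Einv_Omega Einv_lip CE fC \<Phi>C t, of n,
        folded rho_def A_def]
    then show "inC \<theta> dI p \<beta> ((Lft b \<zeta> f0 p h lam Einv f t ^^ n) \<Phi>)" by blast
    have "0 \<le> hol_semi \<theta> dI p \<beta> \<Phi> * (A / (1 - rho))" using hol_semi_nonneg[OF \<Phi>C] A0 rho by simp
    then show "Cnorm \<theta> dI p \<beta> ((Lft b \<zeta> f0 p h lam Einv f t ^^ n) \<Phi>) \<le> (1 + A / (1 - rho)) * Cnorm \<theta> dI p \<beta> \<Phi>"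
      using iterate unfolding Cnorm_def by (simp add: algebra_simps add_divide_distrib)
  qed
qed

end

text \<open>The fixed point p has a preimage, so there is at least one inverse branch.\<close>
lemma branches_nonempty:
  fixes b :: nat and \<zeta> :: "nat \<Rightarrow> real \<Rightarrow> real"
  assumes "p \<in> Iset" "\<tau> p = p" "\<forall>s\<in>Iset. {u\<in>Iset. \<tau> u = s} = (\<lambda>j. \<zeta> j s) ` {..<b}"
  shows "0 < b"
proof -
  have "p \<in> (\<lambda>j. \<zeta> j p) ` {..<b}" using assms by blast
  then obtain j where "j < b" by blast
  then show ?thesis by simp
qed

lemma inverse_maps_Omega:
  assumes "bij_betw E Omega Omega" "\<forall>x\<in>Omega. Einv (E x) = x" "x \<in> Omega"
  shows "Einv x \<in> Omega"
  using assms by (metis bij_betw_imp_surj_on imageE)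

theorem mainTheorem18:
  fixes dI :: "real \<Rightarrow> real \<Rightarrow> real"
    and \<theta> \<eta> \<beta> CE lam p :: real
    and \<tau> :: "real \<Rightarrow> real"
    and b :: nat
    and \<zeta> :: "nat \<Rightarrow> real \<Rightarrow> real"
    and f0 h f :: "(int \<Rightarrow> real) \<Rightarrow> real"
    and \<nu>0 :: "(int \<Rightarrow> real) measure"
    and E Einv :: "(int \<Rightarrow> real) \<Rightarrow> (int \<Rightarrow> real)"
  assumes dI_metric: "metric_on_I dI"
    and dI_bounded: "\<exists>B. \<forall>s\<in>Iset. \<forall>t\<in>Iset. dI s t \<le> B"
    and theta: "0 < \<theta>" "\<theta> < 1"
    and eta: "0 < \<eta>" "\<eta> < 1"
    and beta: "0 < \<beta>" "\<beta> \<le> 1"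
    and tau_maps: "\<forall>s\<in>Iset. \<tau> s \<in> Iset"
    and fixpt: "p \<in> Iset" "\<tau> p = p"
    and branches: "\<forall>j<b. \<forall>s\<in>Iset. \<zeta> j s \<in> Iset \<and> \<tau> (\<zeta> j s) = s"
    and full: "\<forall>s\<in>Iset. {u\<in>Iset. \<tau> u = s} = (\<lambda>j. \<zeta> j s) ` {..<b}"
    and distinct_br: "\<forall>s\<in>Iset. inj_on (\<lambda>j. \<zeta> j s) {..<b}"
    and contract: "\<forall>j<b. \<forall>s\<in>Iset. \<forall>t\<in>Iset. dI (\<zeta> j s) (\<zeta> j t) \<le> \<eta> * dI s t"
    and f0C: "inC \<theta> dI p \<beta> f0"
    and nu_prob: "prob_space \<nu>0"
    and nu_space: "space \<nu>0 = Omega"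
    and nu_borel: "sets \<nu>0 = sigma_sets Omega (Om_opens \<theta> dI)"
    and lam_def: "lam = (\<integral>x. Pop b \<zeta> f0 p (\<lambda>_. 1::real) x \<partial>\<nu>0)"
    and nu_eig: "\<forall>\<Phi> :: (int \<Rightarrow> real) \<Rightarrow> real. inC \<theta> dI p \<beta> \<Phi> \<longrightarrow>
                   (\<integral>x. Pop b \<zeta> f0 p \<Phi> x \<partial>\<nu>0) = lam * (\<integral>x. \<Phi> x \<partial>\<nu>0)"
    and hC: "inC \<theta> dI p \<beta> h"
    and h_pos: "\<forall>x\<in>Omega. 0 < h x"
    and h_eig: "\<forall>x\<in>Omega. Pop b \<zeta> f0 p h x = lam * h x"
    and h_norm: "(\<integral>x. h x \<partial>\<nu>0) = 1"
    and h_reg: "\<forall>x\<in>Omega. \<forall>y\<in>Omega. h x \<le>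
        exp (hol_semi \<theta> dI p \<beta> f0 * (\<eta> powr \<beta> / (1 - \<eta> powr \<beta>)) * dOm \<theta> dI x y powr \<beta>) * h y"
    and E_bij: "bij_betw E Omega Omega"
    and Einv1: "\<forall>x\<in>Omega. Einv (E x) = x"
    and Einv2: "\<forall>x\<in>Omega. E (Einv x) = x"
    and CE: "0 < CE" "CE < 1 / \<eta>"
    and E_lip: "\<forall>n::int. \<forall>x\<in>Omega. \<forall>y\<in>Omega.
        dOm \<theta> dI (shiftn n (Einv x)) (shiftn n (Einv y)) \<le> CE * dOm \<theta> dI (shiftn n x) (shiftn n y)"
    and fC: "inC \<theta> dI p \<beta> f"
  shows "\<exists>C9>0. \<exists>\<delta>>0. \<forall>t. \<bar>t\<bar> < \<delta> \<longrightarrow>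
           (\<forall>n. \<forall>\<Phi> :: (int \<Rightarrow> real) \<Rightarrow> complex. inC \<theta> dI p \<beta> \<Phi> \<longrightarrow>
              inC \<theta> dI p \<beta> ((Lft b \<zeta> f0 p h lam Einv f t ^^ n) \<Phi>) \<and>
              Cnorm \<theta> dI p \<beta> ((Lft b \<zeta> f0 p h lam Einv f t ^^ n) \<Phi>) \<le> C9 * Cnorm \<theta> dI p \<beta> \<Phi>)"
proof -
  obtain Bd where Bd: "\<forall>s\<in>Iset. \<forall>t\<in>Iset. dI s t \<le> Bd" using dI_bounded by blast
  interpret normalised_operator dI \<theta> \<eta> \<beta> p Bd b \<zeta> f0 h lam
    using branches_nonempty[OF fixpt full] branches
    by unfold_locales (use dI_metric Bd theta eta beta fixpt contract f0C hC h_pos h_eig h_reg in auto)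
  have Einv_Omega: "\<forall>x\<in>Omega. Einv x \<in> Omega"
    using inverse_maps_Omega[OF E_bij Einv1] by blast
  text \<open>The n = 0 instance of the hypothesis on E: E^{-1} is CE-Lipschitz.\<close>
  have Einv_lip: "\<forall>x\<in>Omega. \<forall>y\<in>Omega. d (Einv x) (Einv y) \<le> CE * d x y"
    using spec[OF E_lip, of 0] by (simp add: shiftn_def)
  have "CE * \<eta> < 1" using CE eta by (simp add: less_divide_eq)
  then obtain C9 where "0 < C9" "\<forall>t. \<bar>t\<bar> < 1 \<longrightarrow>
           (\<forall>n. \<forall>\<Phi> :: (int \<Rightarrow> real) \<Rightarrow> complex. inC \<theta> dI p \<beta> \<Phi> \<longrightarrow>
              inC \<theta> dI p \<beta> ((Lft b \<zeta> f0 p h lam Einv f t ^^ n) \<Phi>) \<and>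
              Cnorm \<theta> dI p \<beta> ((Lft b \<zeta> f0 p h lam Einv f t ^^ n) \<Phi>) \<le> C9 * Cnorm \<theta> dI p \<beta> \<Phi>)"
    using twisted_powers_bounded[OF Einv_Omega Einv_lip CE(1) _ fC] by blast
  then show ?thesis by (intro exI[of _ C9] conjI exI[of _ 1]) auto
qed

end
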